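(* Let $M,N$ be weight sequences with $m_k^{1/k}\to\infty$, $n_k^{1/k}\to\infty$ and $C:=\mathrm{mg}(M,N)<\infty$. Let $\varepsilon>0$ and let $g$ be holomorphic on $\Omega_\varepsilon$ and continuous on $\overline{\Omega_\varepsilon}$. Assume there are constants $L,a_1,a_2>0$ with $\sup_{\Omega_\varepsilon}|g|\le L$ and $\sup_{[-1,1]}|g|\le a_1h_m(a_2\varepsilon)$. Then with $a_3:=\max\{a_1,L\}$ and $a_4:=eCa_2$ we have $\sup_{\Omega_{\varepsilon/2}}|g|\le a_3h_n(a_4\varepsilon)$.
   Context: A weight sequence is a sequence $M=(M_k)_{k\ge0}$ of positive reals with $M_k=\mu_1\cdots\mu_k$, $M_0=1$, where $(\mu_k)$ is positive and increasing with $\mu_0=1$, and $M_k^{1/k}\to\infty$; $m_k:=M_k/k!$, $n_k:=N_k/k!$. $h_m(t):=\inf_{k\in\mathbb{N}}m_kt^k$ for $t>0$. $\mathrm{mg}(M,N):=\sup_{j,k\ge0,j+k\ge1}(M_{j+k}/(N_jN_k))^{1/(j+k)}$. For $\varepsilon>0$, $\Omega_\varepsilon\subseteq\mathbb{C}$ denotes the interior of the ellipse with vertices $\pm\cosh\varepsilon$ and co-vertices $\pm i\sinh\varepsilon$. *)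

theory Defs
  imports "HOL-Complex_Analysis.Complex_Analysis"
begin

definition weight_seq :: "(nat \<Rightarrow> real) \<Rightarrow> bool" where
  "weight_seq M \<longleftrightarrow>
     (\<exists>mu :: nat \<Rightarrow> real. mu 0 = 1 \<and> (\<forall>k. mu k > 0) \<and> mono mu \<and>
        (\<forall>k. M k = (\<Prod>i\<in>{1..k}. mu i))) \<and>
     filterlim (\<lambda>k. root k (M k)) at_top sequentially"

definition normw :: "(nat \<Rightarrow> real) \<Rightarrow> nat \<Rightarrow> real" where
  "normw M k = M k / fact k"

definition hfun :: "(nat \<Rightarrow> real) \<Rightarrow> real \<Rightarrow> real" where
  "hfun m t = (INF k. m k * t ^ k)"

definition mg :: "(nat \<Rightarrow> real) \<Rightarrow> (nat \<Rightarrow> real) \<Rightarrow> ereal" where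
  "mg M N = (SUP (j,k)\<in>{(j,k). j + k \<ge> 1}.
       ereal (root (j + k) (M (j + k) / (N j * N k))))"

definition ellipse :: "real \<Rightarrow> complex set" where
  "ellipse \<epsilon> = {z. (Re z / cosh \<epsilon>)\<^sup>2 + (Im z / sinh \<epsilon>)\<^sup>2 < 1}"

end

theory Submission
  imports Defs
begin

(* Write z = cos s with 0 <= Im s < eps/2: cos maps the strip 0 <= Im s <= eps into the closed
   ellipse and the real axis onto [-1, 1]. Hadamard's three-lines theorem for g o cos on this strip
   gives |g z| <= (a1 h)^(1-t) L^t with t = Im s / eps < 1/2 and h = h_m(a2 eps) <= 1, hence
   |g z| <= max a1 L * sqrt h. Finally M_(2k) <= C^(2k) N_k^2 and (k!)^2 <= (2k)! give
   m_(2k) <= (C^k n_k)^2, so sqrt (h_m t) <= h_n (C t), and h_n is increasing. *)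

lemma Re_cos_cosh: "Re (cos z) = cos (Re z) * cosh (Im z)"
  by (simp add: Re_cos cosh_field_def)

lemma Im_cos_sinh: "Im (cos z) = - (sin (Re z) * sinh (Im z))"
  by (simp add: Im_cos sinh_field_def field_simps)

lemma cos_mem_ellipse_iff:
  assumes "e > 0"
  shows "cos s \<in> ellipse e \<longleftrightarrow> \<bar>Im s\<bar> < e"
proof -
  define A where "A = (cosh \<bar>Im s\<bar> / cosh e)\<^sup>2"
  define B where "B = (sinh \<bar>Im s\<bar> / sinh e)\<^sup>2"
  define c where "c = (cos (Re s))\<^sup>2"
  define d where "d = (sin (Re s))\<^sup>2"
  have quot: "(Re (cos s) / cosh e)\<^sup>2 + (Im (cos s) / sinh e)\<^sup>2 = c * A + d * B"
    by (simp add: A_def B_def c_def d_def Re_cos_cosh Im_cos_sinh power_mult_distrib power_divide)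
  have A: "A < 1 \<longleftrightarrow> \<bar>Im s\<bar> < e"
  proof -
    have "cosh \<bar>Im s\<bar> < cosh e \<longleftrightarrow> \<bar>Im s\<bar> < e"
      using assms by (intro cosh_real_nonneg_less_iff) auto
    then show ?thesis
      by (simp add: A_def power_less_one_iff)
  qed
  have B: "B < 1 \<longleftrightarrow> \<bar>Im s\<bar> < e"
  proof -
    have "sinh \<bar>Im s\<bar> < sinh e \<longleftrightarrow> \<bar>Im s\<bar> < e"
      by (rule sinh_real_less_iff)
    then show ?thesis
      using assms by (simp add: B_def abs_square_less_1 divide_less_eq del: sinh_real_abs)
  qed
  \<comment> \<open>since c + d = 1, the quotient c * A + d * B lies between min A B and max A B\<close>
  have cd: "c \<ge> 0" "d \<ge> 0" "c + d = 1"
    by (simp_all add: c_def d_def)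
  have "min A B = c * min A B + d * min A B" "max A B = c * max A B + d * max A B"
    using cd(3) by (metis distrib_right mult_1)+
  then have "min A B \<le> c * A + d * B" "c * A + d * B \<le> max A B"
    using mult_left_mono[of "min A B" A c] mult_left_mono[of "min A B" B d]
      mult_left_mono[of A "max A B" c] mult_left_mono[of B "max A B" d] cd
    by simp_all
  then show ?thesis
    unfolding ellipse_def mem_Collect_eq quot using A B by linarith
qed

lemma cos_mem_closure_ellipse:
  assumes "e > 0" "0 \<le> Im s" "Im s \<le> e"
  shows "cos s \<in> closure (ellipse e)"
proof (rule Lim_in_closed_set[OF closed_closure _ trivial_limit_at_right_real])
  have "((\<lambda>t. cos (s - \<i> * of_real t)) \<longlongrightarrow> cos (s - \<i> * of_real 0)) (at_right 0)"
    by (intro tendsto_intros)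
  then show "((\<lambda>t. cos (s - \<i> * of_real t)) \<longlongrightarrow> cos s) (at_right 0)"
    by simp
  have "cos (s - \<i> * of_real t) \<in> ellipse e" if "0 < t" "t < e" for t
    using that assms by (subst cos_mem_ellipse_iff) auto
  then show "\<forall>\<^sub>F t in at_right 0. cos (s - \<i> * of_real t) \<in> closure (ellipse e)"
    unfolding eventually_at_right_field using assms closure_subset by blast
qed

lemma ellipse_eq_cos_image:
  assumes "e > 0"
  shows "ellipse e = cos ` {s. 0 \<le> Im s \<and> Im s < e}"
proof
  show "cos ` {s. 0 \<le> Im s \<and> Im s < e} \<subseteq> ellipse e"
    using assms by (auto simp: cos_mem_ellipse_iff)
  show "ellipse e \<subseteq> cos ` {s. 0 \<le> Im s \<and> Im s < e}"
  proof
    fix z assume z: "z \<in> ellipse e"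
    define w where "w = Arccos z"
    define s where "s = (if 0 \<le> Im w then w else - w)"
    have "cos w = z"
      by (simp add: w_def)
    then have "cos s = z"
      by (simp add: s_def)
    moreover have "\<bar>Im w\<bar> < e"
      using z cos_mem_ellipse_iff[OF assms, of w] \<open>cos w = z\<close> by simp
    then have "0 \<le> Im s \<and> Im s < e"
      by (auto simp: s_def)
    ultimately show "z \<in> cos ` {s. 0 \<le> Im s \<and> Im s < e}"
      by blast
  qed
qed

lemma eventually_gaussian_le:
  fixes \<delta> c B :: real
  assumes "\<delta> > 0" "c > 0"
  shows "\<forall>\<^sub>F X in at_top. B * exp (- \<delta> * X\<^sup>2) \<le> c"
proof -
  have "filterlim (\<lambda>X::real. \<delta> * X\<^sup>2) at_top at_top"
    using assms(1) by (intro filterlim_tendsto_pos_mult_at_top[OF tendsto_const]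
        filterlim_pow_at_top filterlim_ident) auto
  then have "filterlim (\<lambda>X::real. - \<delta> * X\<^sup>2) at_bot at_top"
    by (simp add: filterlim_uminus_at_bot)
  then have "((\<lambda>X. B * exp (- \<delta> * X\<^sup>2)) \<longlongrightarrow> B * 0) at_top"
    by (intro tendsto_mult tendsto_const filterlim_compose[OF exp_at_bot])
  then have "\<forall>\<^sub>F X in at_top. B * exp (- \<delta> * X\<^sup>2) < c"
    using assms(2) by (intro order_tendstoD(2)) auto
  then show ?thesis
    by (rule eventually_mono) simp
qed

lemma frontier_cbox_complex_cases:
  assumes "z \<in> frontier (cbox a b)"
  shows "z \<in> cbox a b" "Re z = Re a \<or> Re z = Re b \<or> Im z = Im a \<or> Im z = Im b"
  using assms by (auto simp: frontier_cbox in_cbox_complex_iff in_box_complex_iff)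

lemma norm_exp_neg_square:
  "norm (exp (- of_real \<delta> * s\<^sup>2)) = exp (\<delta> * ((Im s)\<^sup>2 - (Re s)\<^sup>2))"
  by (simp add: Re_power2 algebra_simps)

lemma damped_le_on_rectangle_frontier:
  fixes F :: "complex \<Rightarrow> complex"
  assumes bnd: "\<And>s. 0 \<le> Im s \<Longrightarrow> Im s \<le> e \<Longrightarrow> norm (F s) \<le> B"
    and edges: "\<And>s. Im s = 0 \<or> Im s = e \<Longrightarrow> norm (F s) \<le> c"
    and "\<delta> > 0" and X: "B * exp (- \<delta> * X\<^sup>2) \<le> c"
    and "z \<in> frontier (cbox (Complex (-X) 0) (Complex X e))"
  shows "norm (exp (- of_real \<delta> * z\<^sup>2) * F z) \<le> c * exp (\<delta> * e\<^sup>2)"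
proof -
  have z: "\<bar>Re z\<bar> \<le> X" "0 \<le> Im z" "Im z \<le> e" "Im z = 0 \<or> Im z = e \<or> \<bar>Re z\<bar> = X"
    using frontier_cbox_complex_cases[OF assms(5)] by (auto simp: in_cbox_complex_iff)
  have norm_damped: "norm (exp (- of_real \<delta> * z\<^sup>2) * F z)
      = exp (\<delta> * ((Im z)\<^sup>2 - (Re z)\<^sup>2)) * norm (F z)"
    by (simp only: norm_mult norm_exp_neg_square)
  have "(Im z)\<^sup>2 \<le> e\<^sup>2"
    using z by (intro power_mono) auto
  show ?thesis
  proof (cases "\<bar>Re z\<bar> = X")
    case True
    then have "(Re z)\<^sup>2 = X\<^sup>2"
      by (metis power2_abs)
    then have "norm (exp (- of_real \<delta> * z\<^sup>2) * F z)
        \<le> exp (\<delta> * e\<^sup>2) * exp (- \<delta> * X\<^sup>2) * B"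
      using \<open>(Im z)\<^sup>2 \<le> e\<^sup>2\<close> \<open>\<delta> > 0\<close> bnd[OF z(2,3)] norm_ge_zero[of "F z"]
      unfolding norm_damped by (intro mult_mono) (auto simp: exp_add[symmetric] algebra_simps)
    also have "\<dots> \<le> c * exp (\<delta> * e\<^sup>2)"
      using X by (simp add: mult.commute mult.left_commute)
    finally show ?thesis .
  next
    case False
    then have "norm (exp (- of_real \<delta> * z\<^sup>2) * F z) \<le> exp (\<delta> * e\<^sup>2) * c"
      using z \<open>(Im z)\<^sup>2 \<le> e\<^sup>2\<close> \<open>\<delta> > 0\<close> edges[of z]
      unfolding norm_damped by (intro mult_mono) (auto simp: algebra_simps)
    then show ?thesis
      by (simp add: mult.commute)
  qed
qed

(* The Gaussian factor exp (-\<delta> s^2) makes F small on the vertical sides of a long rectangle,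
   where only the crude bound B is known; the maximum modulus principle on the rectangle applies. *)
lemma strip_damped_bound:
  fixes F :: "complex \<Rightarrow> complex"
  assumes hol: "F holomorphic_on {s. 0 < Im s \<and> Im s < e}"
    and cont: "continuous_on {s. 0 \<le> Im s \<and> Im s \<le> e} F"
    and bnd: "\<And>s. 0 \<le> Im s \<Longrightarrow> Im s \<le> e \<Longrightarrow> norm (F s) \<le> B"
    and edges: "\<And>s. Im s = 0 \<or> Im s = e \<Longrightarrow> norm (F s) \<le> c"
    and "c > 0" "\<delta> > 0" and s0: "0 \<le> Im s0" "Im s0 \<le> e"
  shows "norm (F s0) \<le> c * exp (\<delta> * (e\<^sup>2 + (Re s0)\<^sup>2))"
proof -
  define G where "G s = exp (- of_real \<delta> * s\<^sup>2) * F s" for s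
  have normG: "norm (G s) = exp (\<delta> * ((Im s)\<^sup>2 - (Re s)\<^sup>2)) * norm (F s)" for s
    by (simp only: G_def norm_mult norm_exp_neg_square)
  have "\<forall>\<^sub>F X in at_top. \<bar>Re s0\<bar> < X \<and> B * exp (- \<delta> * X\<^sup>2) \<le> c"
    using eventually_gaussian_le[OF \<open>\<delta> > 0\<close> \<open>c > 0\<close>] eventually_gt_at_top
    by (rule eventually_conj[rotated])
  then obtain X where X: "\<bar>Re s0\<bar> < X" "B * exp (- \<delta> * X\<^sup>2) \<le> c"
    using eventually_happens'[OF trivial_limit_at_top_linorder] by blast
  define R where "R = cbox (Complex (-X) 0) (Complex X e)"
  have R: "z \<in> R \<longleftrightarrow> \<bar>Re z\<bar> \<le> X \<and> 0 \<le> Im z \<and> Im z \<le> e" for z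
    by (auto simp: R_def in_cbox_complex_iff)
  have "G holomorphic_on interior R"
  proof -
    have "interior R \<subseteq> {s. 0 < Im s \<and> Im s < e}"
      by (auto simp: R_def in_box_complex_iff)
    then show ?thesis
      unfolding G_def by (intro holomorphic_intros holomorphic_on_subset[OF hol])
  qed
  moreover have "continuous_on (closure R) G"
  proof -
    have "closure R \<subseteq> {s. 0 \<le> Im s \<and> Im s \<le> e}"
      by (auto simp: R_def in_cbox_complex_iff)
    then show ?thesis
      unfolding G_def by (intro continuous_intros continuous_on_subset[OF cont])
  qed
  moreover have "bounded R"
    by (simp add: R_def)
  moreover have "norm (G z) \<le> c * exp (\<delta> * e\<^sup>2)" if "z \<in> frontier R" for z
    using damped_le_on_rectangle_frontier[OF bnd edges \<open>\<delta> > 0\<close> X(2)] that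
    by (simp add: G_def R_def)
  moreover have "s0 \<in> R"
    using R X(1) s0 by simp
  ultimately have "norm (G s0) \<le> c * exp (\<delta> * e\<^sup>2)"
    by (rule maximum_modulus_frontier)
  then have "norm (F s0) \<le> c * exp (\<delta> * e\<^sup>2) / exp (\<delta> * ((Im s0)\<^sup>2 - (Re s0)\<^sup>2))"
    by (simp add: normG pos_le_divide_eq mult.commute)
  also have "\<dots> = c * exp (\<delta> * (e\<^sup>2 - (Im s0)\<^sup>2 + (Re s0)\<^sup>2))"
    by (simp only: times_divide_eq_right[symmetric] exp_diff[symmetric]) (simp add: algebra_simps)
  also have "\<dots> \<le> c * exp (\<delta> * (e\<^sup>2 + (Re s0)\<^sup>2))"
    using \<open>c > 0\<close> \<open>\<delta> > 0\<close> by simp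
  finally show ?thesis .
qed

lemma strip_maximum_principle:
  fixes F :: "complex \<Rightarrow> complex"
  assumes "F holomorphic_on {s. 0 < Im s \<and> Im s < e}"
    and "continuous_on {s. 0 \<le> Im s \<and> Im s \<le> e} F"
    and "\<And>s. 0 \<le> Im s \<Longrightarrow> Im s \<le> e \<Longrightarrow> norm (F s) \<le> B"
    and "\<And>s. Im s = 0 \<or> Im s = e \<Longrightarrow> norm (F s) \<le> c"
    and "c > 0" and "0 \<le> Im s0" "Im s0 \<le> e"
  shows "norm (F s0) \<le> c"
proof -
  have "((\<lambda>\<delta>. c * exp (\<delta> * (e\<^sup>2 + (Re s0)\<^sup>2))) \<longlongrightarrow> c * exp (0 * (e\<^sup>2 + (Re s0)\<^sup>2))) (at_right 0)"
    by (intro tendsto_intros)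
  moreover have "\<forall>\<^sub>F \<delta> in at_right 0. norm (F s0) \<le> c * exp (\<delta> * (e\<^sup>2 + (Re s0)\<^sup>2))"
    using eventually_at_right_less
    by (rule eventually_mono) (use strip_damped_bound[OF assms(1-5) _ assms(6,7)] in blast)
  ultimately show ?thesis
    using tendsto_le[OF trivial_limit_at_right_real _ tendsto_const] by simp
qed

theorem three_lines:
  fixes K :: "complex \<Rightarrow> complex"
  assumes hol: "K holomorphic_on {s. 0 < Im s \<and> Im s < e}"
    and cont: "continuous_on {s. 0 \<le> Im s \<and> Im s \<le> e} K"
    and bnd: "\<And>s. 0 \<le> Im s \<Longrightarrow> Im s \<le> e \<Longrightarrow> norm (K s) \<le> B"
    and bot: "\<And>s. Im s = 0 \<Longrightarrow> norm (K s) \<le> a"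
    and top: "\<And>s. Im s = e \<Longrightarrow> norm (K s) \<le> b"
    and "a > 0" "b > 0" "e > 0" and s0: "0 \<le> Im s0" "Im s0 \<le> e"
  shows "norm (K s0) \<le> a powr (1 - Im s0 / e) * b powr (Im s0 / e)"
proof -
  define \<beta> where "\<beta> = (ln a - ln b) / e"
  define F where "F s = exp (- \<i> * of_real \<beta> * s) * K s" for s
  have normF: "norm (F s) = exp (\<beta> * Im s) * norm (K s)" for s
    by (simp add: F_def norm_mult)
  \<comment> \<open>multiplying by exp (\<beta> * Im s) turns both edge bounds a and b into a\<close>
  have "norm (F s0) \<le> a"
  proof (rule strip_maximum_principle[of F e "exp (\<bar>\<beta>\<bar> * e) * B" a s0])
    show "F holomorphic_on {s. 0 < Im s \<and> Im s < e}"
      unfolding F_def by (intro holomorphic_intros hol)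
    show "continuous_on {s. 0 \<le> Im s \<and> Im s \<le> e} F"
      unfolding F_def by (intro continuous_intros cont)
    show "norm (F s) \<le> exp (\<bar>\<beta>\<bar> * e) * B" if "0 \<le> Im s" "Im s \<le> e" for s
    proof -
      have "\<beta> * Im s \<le> \<bar>\<beta>\<bar> * e"
        using that abs_ge_self[of \<beta>] by (intro mult_mono) auto
      then show ?thesis
        unfolding normF using bnd[OF that] by (intro mult_mono) auto
    qed
    show "norm (F s) \<le> a" if "Im s = 0 \<or> Im s = e" for s
    proof -
      have "exp (\<beta> * e) * b = a"
        using \<open>a > 0\<close> \<open>b > 0\<close> \<open>e > 0\<close> by (simp add: \<beta>_def exp_diff)
      then show ?thesis
        using that bot[of s] top[of s] \<open>b > 0\<close> unfolding normF
        by (auto intro: order.trans[OF mult_left_mono])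
    qed
  qed (use assms in auto)
  then have "norm (K s0) \<le> a / exp (\<beta> * Im s0)"
    by (simp add: normF pos_le_divide_eq mult.commute)
  also have "\<dots> = exp (ln a - \<beta> * Im s0)"
    using \<open>a > 0\<close> by (simp add: exp_diff)
  also have "\<dots> = exp ((1 - Im s0 / e) * ln a + Im s0 / e * ln b)"
    using \<open>e > 0\<close> by (simp add: \<beta>_def field_simps)
  also have "\<dots> = a powr (1 - Im s0 / e) * b powr (Im s0 / e)"
    using \<open>a > 0\<close> \<open>b > 0\<close> by (simp add: powr_def exp_add)
  finally show ?thesis .
qed

lemma weight_seq_pos:
  assumes "weight_seq M"
  shows "M k > 0"
proof -
  obtain mu where "\<forall>k. mu k > 0" "\<forall>k. M k = (\<Prod>i\<in>{1..k}. mu i)"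
    using assms unfolding weight_seq_def by blast
  then show ?thesis
    by (simp add: prod_pos)
qed

lemma weight_seq_0:
  assumes "weight_seq M"
  shows "M 0 = 1"
  using assms unfolding weight_seq_def by auto

lemma normw_pos: "M k > 0 \<Longrightarrow> normw M k > 0"
  by (simp add: normw_def)

lemma hfun_bdd_below:
  fixes m :: "nat \<Rightarrow> real"
  assumes "\<And>k. m k \<ge> 0" "t \<ge> 0"
  shows "bdd_below (range (\<lambda>k. m k * t ^ k))"
  using assms by (intro bdd_belowI[of _ 0]) auto

lemma hfun_nonneg:
  fixes m :: "nat \<Rightarrow> real"
  assumes "\<And>k. m k \<ge> 0" "t \<ge> 0"
  shows "hfun m t \<ge> 0"
  unfolding hfun_def using assms by (intro cINF_greatest) auto

lemma hfun_le:
  fixes m :: "nat \<Rightarrow> real"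
  assumes "\<And>k. m k \<ge> 0" "t \<ge> 0"
  shows "hfun m t \<le> m k * t ^ k"
  unfolding hfun_def using hfun_bdd_below[OF assms] by (rule cINF_lower) simp

lemma hfun_mono:
  fixes m :: "nat \<Rightarrow> real"
  assumes "\<And>k. m k \<ge> 0" "0 \<le> t" "t \<le> t'"
  shows "hfun m t \<le> hfun m t'"
  unfolding hfun_def
proof (rule cINF_mono)
  show "bdd_below (range (\<lambda>k. m k * t ^ k))"
    using assms by (intro hfun_bdd_below) auto
  show "\<exists>j\<in>UNIV. m j * t ^ j \<le> m k * t' ^ k" for k
    using assms by (intro bexI[of _ k] mult_left_mono power_mono) auto
qed simp

lemma mg_root_le:
  assumes "mg M N < \<infinity>" "1 \<le> j + k"
  shows "root (j + k) (M (j + k) / (N j * N k)) \<le> real_of_ereal (mg M N)"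
proof -
  have "ereal (root (j + k) (M (j + k) / (N j * N k))) \<le> mg M N"
    unfolding mg_def using assms(2) by (intro SUP_upper2[where i = "(j, k)"]) auto
  then show ?thesis
    using assms(1) by (cases "mg M N") auto
qed

lemma mg_pos:
  assumes "mg M N < \<infinity>" "M 1 > 0" "N 0 > 0" "N 1 > 0"
  shows "real_of_ereal (mg M N) > 0"
proof -
  have "0 < M 1 / (N 1 * N 0)"
    using assms(2-4) by simp
  also have "\<dots> \<le> real_of_ereal (mg M N)"
    using mg_root_le[OF assms(1), of 1 0] by simp
  finally show ?thesis .
qed

lemma le_mg_power:
  assumes "mg M N < \<infinity>" "1 \<le> j + k" "M (j + k) > 0" "N j > 0" "N k > 0"
  shows "M (j + k) \<le> real_of_ereal (mg M N) ^ (j + k) * N j * N k"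
proof -
  define r where "r = M (j + k) / (N j * N k)"
  have "r > 0"
    using assms(3-5) by (simp add: r_def)
  moreover have "0 < j + k"
    using assms(2) by linarith
  ultimately have "r = root (j + k) r ^ (j + k)"
    by (simp add: real_root_pow_pos)
  also have "\<dots> \<le> real_of_ereal (mg M N) ^ (j + k)"
    using mg_root_le[OF assms(1,2)] \<open>r > 0\<close>
    by (intro power_mono) (simp_all add: r_def real_root_ge_zero less_imp_le)
  finally show ?thesis
    using assms(4,5) by (simp add: r_def divide_le_eq mult.assoc)
qed

lemma fact_square_le_fact_double: "fact k * fact k \<le> (fact (2 * k) :: real)"
proof -
  have "fact k * fact k dvd (fact (k + k) :: nat)"
    by (rule fact_fact_dvd_fact)
  then have "fact k * fact k \<le> (fact (k + k) :: nat)"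
    by (intro dvd_imp_le) auto
  then show ?thesis
    by (metis mult_2 of_nat_fact of_nat_le_iff of_nat_mult)
qed

lemma normw_double_le:
  assumes "weight_seq M" "weight_seq N" "mg M N < \<infinity>"
  shows "normw M (2 * k) \<le> (normw N k * real_of_ereal (mg M N) ^ k)\<^sup>2"
proof (cases "k = 0")
  case True
  then show ?thesis
    using weight_seq_0[OF assms(1)] weight_seq_0[OF assms(2)] by (simp add: normw_def)
next
  case False
  define C where "C = real_of_ereal (mg M N)"
  have "M (2 * k) \<le> C ^ (2 * k) * N k * N k"
    using le_mg_power[OF assms(3), of k k] False weight_seq_pos[OF assms(1)]
      weight_seq_pos[OF assms(2)] by (simp add: C_def mult_2)
  moreover have "0 < M (2 * k)"
    using weight_seq_pos[OF assms(1)] .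
  ultimately have "normw M (2 * k) \<le> C ^ (2 * k) * N k * N k / (fact k * fact k)"
    unfolding normw_def using fact_square_le_fact_double[of k] by (intro frac_le) auto
  also have "\<dots> = (normw N k * C ^ k)\<^sup>2"
    unfolding mult.commute[of 2 k] power_mult
    by (simp add: normw_def power_mult_distrib power_divide power2_eq_square mult_ac)
  finally show ?thesis
    unfolding C_def .
qed

lemma sqrt_hfun_le:
  assumes "weight_seq M" "weight_seq N" "mg M N < \<infinity>" "t \<ge> 0"
  shows "sqrt (hfun (normw M) t) \<le> hfun (normw N) (real_of_ereal (mg M N) * t)"
  unfolding hfun_def[of "normw N"]
proof (rule cINF_greatest)
  fix k
  define C where "C = real_of_ereal (mg M N)"
  have "C > 0"
    using mg_pos[OF assms(3)] weight_seq_pos assms(1,2) by (simp add: C_def)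
  have "hfun (normw M) t \<le> normw M (2 * k) * t ^ (2 * k)"
    using hfun_le normw_pos weight_seq_pos[OF assms(1)] assms(4) less_imp_le by metis
  also have "\<dots> \<le> (normw N k * C ^ k)\<^sup>2 * t ^ (2 * k)"
    using normw_double_le[OF assms(1-3)] assms(4) by (intro mult_right_mono) (auto simp: C_def)
  also have "\<dots> = (normw N k * (C * t) ^ k)\<^sup>2"
    by (simp add: power_mult_distrib power_mult[symmetric] mult_ac)
  finally have "sqrt (hfun (normw M) t) \<le> \<bar>normw N k * (C * t) ^ k\<bar>"
    using real_sqrt_le_mono by fastforce
  then show "sqrt (hfun (normw M) t) \<le> normw N k * (C * t) ^ k"
    using \<open>C > 0\<close> assms(4) normw_pos[of N k] weight_seq_pos[OF assms(2), of k] by simp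
qed simp

lemma interpolation_le_max_sqrt:
  fixes a L u t :: real
  assumes "a > 0" "L > 0" "0 < u" "u \<le> 1" "0 \<le> t" "t \<le> 1/2"
  shows "(a * u) powr (1 - t) * L powr t \<le> max a L * sqrt u"
proof -
  define m where "m = max a L"
  have "(a * u) powr (1 - t) * L powr t = (a powr (1 - t) * L powr t) * u powr (1 - t)"
    by (simp add: powr_mult)
  also have "\<dots> \<le> (m powr (1 - t) * m powr t) * u powr (1 / 2)"
    using assms by (intro mult_mono powr_mono2 powr_mono') (auto simp: m_def)
  also have "\<dots> = m * sqrt u"
    using assms by (simp add: m_def powr_add[symmetric] powr_half_sqrt)
  finally show ?thesis
    unfolding m_def .
qed

lemma strip_bound_sqrt:
  fixes K :: "complex \<Rightarrow> complex"
  assumes hol: "K holomorphic_on {s. 0 < Im s \<and> Im s < e}"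
    and cont: "continuous_on {s. 0 \<le> Im s \<and> Im s \<le> e} K"
    and bnd: "\<And>s. 0 \<le> Im s \<Longrightarrow> Im s \<le> e \<Longrightarrow> norm (K s) \<le> L"
    and bot: "\<And>s. Im s = 0 \<Longrightarrow> norm (K s) \<le> a * u"
    and "e > 0" "a > 0" "L > 0" "0 \<le> u" "u \<le> 1" and s0: "0 \<le> Im s0" "Im s0 \<le> e / 2"
  shows "norm (K s0) \<le> max a L * sqrt u"
proof (cases "u < 1")
  case False
  have "norm (K s0) \<le> L"
    using bnd s0 \<open>e > 0\<close> by simp
  then show ?thesis
    using False \<open>u \<le> 1\<close> by simp
next
  case True
  \<comment> \<open>three_lines needs a positive bound on the real axis, so use a * v for v > u and let v \<rightarrow> u\<close>
  have bound: "norm (K s0) \<le> max a L * sqrt v" if "u < v" "v \<le> 1" for v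
  proof -
    have "norm (K s0) \<le> (a * v) powr (1 - Im s0 / e) * L powr (Im s0 / e)"
    proof (rule three_lines[OF hol cont bnd])
      show "norm (K s) \<le> a * v" if "Im s = 0" for s
        using order.trans[OF bot[OF that]] \<open>a > 0\<close> \<open>u < v\<close> by simp
    qed (use assms that in auto)
    also have "\<dots> \<le> max a L * sqrt v"
      using assms that by (intro interpolation_le_max_sqrt) (auto simp: field_simps)
    finally show ?thesis .
  qed
  have "((\<lambda>v. max a L * sqrt v) \<longlongrightarrow> max a L * sqrt u) (at_right u)"
    by (intro tendsto_intros)
  moreover have "\<forall>\<^sub>F v in at_right u. norm (K s0) \<le> max a L * sqrt v"
    unfolding eventually_at_right_field using True bound by (intro exI[of _ 1]) auto
  ultimately show ?thesis
    using tendsto_le[OF trivial_limit_at_right_real _ tendsto_const] by blast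
qed

lemma ellipse_bound_sqrt:
  fixes g :: "complex \<Rightarrow> complex"
  assumes "e > 0" and hol: "g holomorphic_on ellipse e"
    and cont: "continuous_on (closure (ellipse e)) g"
    and bnd: "\<forall>z\<in>ellipse e. norm (g z) \<le> L"
    and bot: "\<forall>x\<in>{-1..1}. norm (g (of_real x)) \<le> a * u"
    and "a > 0" "L > 0" "0 \<le> u" "u \<le> 1" and z: "z \<in> ellipse (e / 2)"
  shows "norm (g z) \<le> max a L * sqrt u"
proof -
  obtain s0 where "z = cos s0" "0 \<le> Im s0" "Im s0 < e / 2"
    using z ellipse_eq_cos_image[of "e / 2"] \<open>e > 0\<close> by auto
  have closed_strip: "cos ` {s. 0 \<le> Im s \<and> Im s \<le> e} \<subseteq> closure (ellipse e)"
    using cos_mem_closure_ellipse \<open>e > 0\<close> by auto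
  have "norm (g (cos s0)) \<le> max a L * sqrt u"
  proof (rule strip_bound_sqrt[where K = "g \<circ> cos" and e = e, simplified])
    have "cos ` {s. 0 < Im s \<and> Im s < e} \<subseteq> ellipse e"
      using \<open>e > 0\<close> by (auto simp: cos_mem_ellipse_iff)
    then show "(g \<circ> cos) holomorphic_on {s. 0 < Im s \<and> Im s < e}"
      by (intro holomorphic_on_compose_gen[OF _ hol]) (auto intro: holomorphic_intros)
    show "continuous_on {s. 0 \<le> Im s \<and> Im s \<le> e} (\<lambda>s. g (cos s))"
      by (rule continuous_on_compose2[OF cont _ closed_strip]) (intro continuous_intros)
    show "norm (g (cos s)) \<le> L" if "0 \<le> Im s" "Im s \<le> e" for s
      using continuous_on_closure_norm_le[OF cont bnd] closed_strip that by blast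
    show "norm (g (cos s)) \<le> a * u" if "Im s = 0" for s
    proof -
      have "cos s = of_real (cos (Re s))"
        using that by (metis complex_is_Real_iff cos_of_real of_real_Re)
      then show ?thesis
        using bot by simp
    qed
  qed (use assms \<open>0 \<le> Im s0\<close> \<open>Im s0 < e / 2\<close> in auto)
  then show ?thesis
    using \<open>z = cos s0\<close> by simp
qed

theorem lemma5p2:
  fixes M N :: "nat \<Rightarrow> real" and g :: "complex \<Rightarrow> complex"
    and \<epsilon> L a1 a2 :: real
  assumes "weight_seq M" and "weight_seq N"
    and "filterlim (\<lambda>k. root k (normw M k)) at_top sequentially"
    and "filterlim (\<lambda>k. root k (normw N k)) at_top sequentially"
    and "mg M N < \<infinity>"
    and "\<epsilon> > 0"
    and "g holomorphic_on ellipse \<epsilon>"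
    and "continuous_on (closure (ellipse \<epsilon>)) g"
    and "L > 0" and "a1 > 0" and "a2 > 0"
    and "\<forall>z\<in>ellipse \<epsilon>. norm (g z) \<le> L"
    and "\<forall>x\<in>{-1..1}. norm (g (complex_of_real x)) \<le> a1 * hfun (normw M) (a2 * \<epsilon>)"
  shows "\<forall>z\<in>ellipse (\<epsilon> / 2).
           norm (g z) \<le> max a1 L * hfun (normw N) (exp 1 * real_of_ereal (mg M N) * a2 * \<epsilon>)"
proof
  fix z assume z: "z \<in> ellipse (\<epsilon> / 2)"
  define C where "C = real_of_ereal (mg M N)"
  define h where "h = hfun (normw M) (a2 * \<epsilon>)"
  have m_nonneg: "normw M k \<ge> 0" and n_nonneg: "normw N k \<ge> 0" for k
    using normw_pos weight_seq_pos assms(1,2) less_imp_le by metis+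
  have "0 \<le> h" "h \<le> 1"
    using hfun_nonneg[of "normw M"] hfun_le[of "normw M" _ 0] m_nonneg assms(6,11)
    by (simp_all add: h_def normw_def weight_seq_0[OF assms(1)])
  then have "norm (g z) \<le> max a1 L * sqrt h"
    using ellipse_bound_sqrt[OF assms(6-8,12)] assms(9,10,13) z by (simp add: h_def)
  also have "sqrt h \<le> hfun (normw N) (C * (a2 * \<epsilon>))"
    unfolding h_def C_def using sqrt_hfun_le[OF assms(1,2,5)] assms(6,11) by simp
  also have "\<dots> \<le> hfun (normw N) (exp 1 * C * a2 * \<epsilon>)"
  proof (rule hfun_mono[of "normw N", OF n_nonneg])
    have "C > 0"
      using mg_pos[OF assms(5)] weight_seq_pos assms(1,2) by (simp add: C_def)
    then show "0 \<le> C * (a2 * \<epsilon>)" "C * (a2 * \<epsilon>) \<le> exp 1 * C * a2 * \<epsilon>"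
      using assms(6,11) by (simp_all add: mult_ac)
  qed
  finally show "norm (g z) \<le> max a1 L * hfun (normw N) (exp 1 * C * a2 * \<epsilon>)"
    using assms(9) by (simp add: mult_left_mono)
qed

end
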